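(* Suppose $(X_k)_{k=1}^\infty$, $X$ and $Y$ are shift spaces over a finite alphabet $\mathscr{A}$ such that $\underline d^H(X_k,X)\to0$ and $\underline d^H(X_k,Y)\to0$ as $k\to\infty$. Then $\mathcal M_\sigma(X)=\mathcal M_\sigma(Y)$.
   Context: $\underline d(x,y)=\liminf_{n}\frac1n|\{0\le j<n:x_j\ne y_j\}|$ on $\mathscr{A}^{\mathbb N_0}$ (not a pseudometric: it need not satisfy the triangle inequality), and $\underline d^H(A,B)=\max\{\sup_{a\in A}\inf_{b\in B}\underline d(a,b),\sup_{b\in B}\inf_{a\in A}\underline d(a,b)\}$. $\mathcal M_\sigma(X)$ is the set of shift-invariant Borel probability measures supported on $X$. *)

theory Defs
  imports "HOL-Analysis.Analysis" "HOL-Probability.Probability"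
begin

text \<open>One-sided sequences over a finite alphabet 'a (discrete topology); the space
  nat \<Rightarrow> 'a carries the product topology of the library.\<close>

definition shift :: "(nat \<Rightarrow> 'a) \<Rightarrow> (nat \<Rightarrow> 'a)" where
  "shift x = (\<lambda>n. x (Suc n))"

definition shift_space :: "(nat \<Rightarrow> 'a::{finite,discrete_topology}) set \<Rightarrow> bool" where
  "shift_space X \<longleftrightarrow> X \<noteq> {} \<and> closed X \<and> shift ` X \<subseteq> X"

definition ldist :: "(nat \<Rightarrow> 'a) \<Rightarrow> (nat \<Rightarrow> 'a) \<Rightarrow> real" where
  "ldist x y = real_of_ereal
     (liminf (\<lambda>n. ereal (real (card {j. j < n \<and> x j \<noteq> y j}) / real n)))"

definition ldistH :: "(nat \<Rightarrow> 'a) set \<Rightarrow> (nat \<Rightarrow> 'a) set \<Rightarrow> real" where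
  "ldistH A B = max (SUP a\<in>A. INF b\<in>B. ldist a b) (SUP b\<in>B. INF a\<in>A. ldist a b)"

definition inv_measures :: "(nat \<Rightarrow> 'a::{finite,discrete_topology}) set \<Rightarrow> (nat \<Rightarrow> 'a) measure set" where
  "inv_measures X = {M. prob_space M \<and> sets M = sets borel
      \<and> (\<forall>A\<in>sets borel. emeasure M (shift -` A) = emeasure M A)
      \<and> emeasure M X = 1}"

end

theory Submission
  imports Defs
begin

text \<open>If an invariant measure on \<open>X\<close> gave positive mass to the complement of \<open>Y\<close>, it would
  charge an open set \<open>C\<close> of points whose prefix of some length \<open>L\<close> occurs in no point of \<open>Y\<close>.
  By invariance, points of \<open>X\<close> visit \<open>C\<close> with positive frequency along arbitrarily long
  orbit segments, and a rising sun argument together with compactness yields a point of \<open>X\<close>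
  visiting \<open>C\<close> with positive frequency from time 0 at every time scale. A point of \<open>X\<^sub>k\<close> that is
  close to it in lower density distance inherits this along a subsequence, and the same
  compactness argument produces a point of \<open>X\<^sub>k\<close> visiting \<open>C\<close> uniformly often. Each visit to
  \<open>C\<close> forces a disagreement with every point of \<open>Y\<close> within the next \<open>L\<close> coordinates, so this
  point has lower density distance of order \<open>1/L\<close> from \<open>Y\<close>, contradicting
  \<open>ldistH (X\<^sub>k) Y \<longlonglongrightarrow> 0\<close>.\<close>

lemma compact_UNIV_fun: "compact (UNIV :: ('i \<Rightarrow> 'a::{finite,topological_space}) set)"
proof -
  have "compact_space (product_topology (\<lambda>i. euclidean :: 'a topology) (UNIV :: 'i set))"
    by (subst compact_space_product_topology) (simp add: compact_space_def finite_imp_compact)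
  then show ?thesis
    by (simp add: euclidean_product_topology compact_space_def compactin_euclidean_iff)
qed

lemma compact_shift_space:
  fixes X :: "(nat \<Rightarrow> 'a::{finite,discrete_topology}) set"
  assumes "shift_space X"
  shows "compact X"
proof -
  have "closed X" using assms by (simp add: shift_space_def)
  from closed_Int_compact[OF this compact_UNIV_fun] show ?thesis by simp
qed

lemma compact_Int_decseq_nonempty:
  fixes K :: "nat \<Rightarrow> 'a::topological_space set"
  assumes "compact S" and "\<And>n. closed (K n)" and "decseq K" and "\<And>n. S \<inter> K n \<noteq> {}"
  shows "S \<inter> (\<Inter>n. K n) \<noteq> {}"
proof (rule compact_imp_fip_image[OF \<open>compact S\<close> assms(2)])
  fix I :: "nat set" assume "finite I"
  have "K (Max I) \<subseteq> K n" if "n \<in> I" for n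
    using decseqD[OF \<open>decseq K\<close> Max_ge[OF \<open>finite I\<close> that]] .
  then have "K (Max I) \<subseteq> (\<Inter>n\<in>I. K n)" by blast
  then show "S \<inter> (\<Inter>n\<in>I. K n) \<noteq> {}"
    using assms(4)[of "Max I"] by blast
qed

definition prefix_determined :: "nat \<Rightarrow> (nat \<Rightarrow> 'a) set \<Rightarrow> bool" where
  "prefix_determined L A \<longleftrightarrow> (\<forall>u v. (\<forall>i<L. u i = v i) \<longrightarrow> (u \<in> A \<longleftrightarrow> v \<in> A))"

lemma prefix_determined_Compl: "prefix_determined L A \<Longrightarrow> prefix_determined L (- A)"
  unfolding prefix_determined_def by blast

lemma open_prefix_determined:
  fixes A :: "(nat \<Rightarrow> 'a::discrete_topology) set"
  assumes "prefix_determined L A"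
  shows "open A"
proof -
  have "open (\<Union>u\<in>A. {v. \<forall>i\<in>{..<L}. v (id i) \<in> {u i}})"
    by (intro open_UN ballI product_topology_basis') (auto intro: discrete_topology_class.open_discrete)
  also have "(\<Union>u\<in>A. {v. \<forall>i\<in>{..<L}. v (id i) \<in> {u i}}) = A"
    using assms unfolding prefix_determined_def by (auto 4 3)
  finally show ?thesis .
qed

lemma closed_prefix_determined:
  fixes A :: "(nat \<Rightarrow> 'a::discrete_topology) set"
  shows "prefix_determined L A \<Longrightarrow> closed A"
  unfolding closed_def by (intro open_prefix_determined prefix_determined_Compl)

definition avoid_prefix :: "(nat \<Rightarrow> 'a) set \<Rightarrow> nat \<Rightarrow> (nat \<Rightarrow> 'a) set" where
  "avoid_prefix Y L = {u. \<forall>y\<in>Y. \<exists>i<L. u i \<noteq> y i}"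

lemma prefix_determined_avoid_prefix: "prefix_determined L (avoid_prefix Y L)"
  unfolding prefix_determined_def avoid_prefix_def
  by (auto simp: conj_commute cong: conj_cong)

lemma avoid_prefix_empty: "Y \<noteq> {} \<Longrightarrow> avoid_prefix Y 0 = {}"
  unfolding avoid_prefix_def by auto

lemma Union_avoid_prefix:
  fixes Y :: "(nat \<Rightarrow> 'a::topological_space) set"
  assumes "closed Y"
  shows "(\<Union>L. avoid_prefix Y L) = - Y"
proof
  show "(\<Union>L. avoid_prefix Y L) \<subseteq> - Y"
    unfolding avoid_prefix_def by auto
  show "- Y \<subseteq> (\<Union>L. avoid_prefix Y L)"
  proof
    fix z assume "z \<in> - Y"
    have "openin (product_topology (\<lambda>i. euclidean) UNIV) (- Y)"
      using open_Compl[OF assms] unfolding open_fun_def .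
    from product_topology_open_contains_basis[OF this \<open>z \<in> - Y\<close>]
    obtain U where U: "z \<in> Pi\<^sub>E UNIV U" "finite {i. U i \<noteq> UNIV}" "Pi\<^sub>E UNIV U \<subseteq> - Y"
      unfolding topspace_euclidean by blast
    define L where "L = Suc (Max {i. U i \<noteq> UNIV})"
    have "z \<in> avoid_prefix Y L"
      unfolding avoid_prefix_def
    proof (intro CollectI ballI)
      fix y assume "y \<in> Y"
      then obtain i where i: "y i \<notin> U i"
        using U(3) by (auto simp: PiE_iff)
      then have "i \<le> Max {i. U i \<noteq> UNIV}"
        using U(2) by (intro Max_ge) auto
      then have "i < L" by (simp add: L_def)
      moreover have "z i \<in> U i" using U(1) by (simp add: PiE_iff)
      ultimately show "\<exists>i<L. z i \<noteq> y i" using i by metis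
    qed
    then show "z \<in> (\<Union>L. avoid_prefix Y L)" by blast
  qed
qed

lemma funpow_shift: "(shift ^^ j) x = (\<lambda>i. x (i + j))"
  by (induction j arbitrary: x) (auto simp: shift_def funpow_Suc_right)

lemma funpow_shift_in: "shift ` S \<subseteq> S \<Longrightarrow> x \<in> S \<Longrightarrow> (shift ^^ j) x \<in> S"
  by (induction j) auto

lemma continuous_on_funpow_shift:
  "continuous_on UNIV (shift ^^ j :: (nat \<Rightarrow> 'a::topological_space) \<Rightarrow> _)"
  unfolding funpow_shift[abs_def]
  by (intro continuous_on_coordinatewise_then_product continuous_on_product_coordinates)

lemma funpow_shift_vimage_borel:
  "C \<in> sets borel \<Longrightarrow> (shift ^^ j) -` C \<in> sets (borel :: (nat \<Rightarrow> 'a::topological_space) measure)"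
  using measurable_sets[OF borel_measurable_continuous_onI[OF continuous_on_funpow_shift]]
  by simp

definition visits :: "(nat \<Rightarrow> 'a) set \<Rightarrow> (nat \<Rightarrow> 'a) \<Rightarrow> nat \<Rightarrow> nat" where
  "visits C x n = card {j. j < n \<and> (shift ^^ j) x \<in> C}"

definition disagreements :: "(nat \<Rightarrow> 'a) \<Rightarrow> (nat \<Rightarrow> 'a) \<Rightarrow> nat \<Rightarrow> nat" where
  "disagreements x y n = card {j. j < n \<and> x j \<noteq> y j}"

lemma visits_eq_sum_indicator:
  "real (visits C x n) = (\<Sum>j<n. indicator ((shift ^^ j) -` C) x)"
proof -
  have "visits C x n = card {j \<in> {..<n}. (shift ^^ j) x \<in> C}"
    unfolding visits_def by (rule arg_cong[where f = card]) auto
  then have "real (visits C x n) = (\<Sum>j \<in> {j \<in> {..<n}. (shift ^^ j) x \<in> C}. 1)"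
    by simp
  also have "\<dots> = (\<Sum>j<n. if (shift ^^ j) x \<in> C then 1 else 0)"
    by (rule sum.inter_filter) simp
  also have "\<dots> = (\<Sum>j<n. indicator ((shift ^^ j) -` C) x)"
    by (intro sum.cong) (auto simp: indicator_def)
  finally show ?thesis .
qed

lemma visits_cong_prefix:
  assumes "prefix_determined L C" and "\<forall>i<m + L. u i = v i"
  shows "visits C u m = visits C v m"
proof -
  have "(shift ^^ j) u \<in> C \<longleftrightarrow> (shift ^^ j) v \<in> C" if "j < m" for j
    using assms that unfolding prefix_determined_def funpow_shift by auto
  then have "{j. j < m \<and> (shift ^^ j) u \<in> C} = {j. j < m \<and> (shift ^^ j) v \<in> C}"
    by blast
  then show ?thesis
    unfolding visits_def by simp
qed

lemma disagreements_le: "disagreements x y n \<le> n"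
  using card_mono[of "{..<n}" "{j. j < n \<and> x j \<noteq> y j}"]
  unfolding disagreements_def by auto

lemma disagreements_add_le: "disagreements x y (n + L) \<le> disagreements x y n + L"
proof -
  have "disagreements x y (n + L) \<le> card ({j. j < n \<and> x j \<noteq> y j} \<union> {n..<n + L})"
    unfolding disagreements_def by (intro card_mono) auto
  also have "\<dots> \<le> disagreements x y n + card {n..<n + L}"
    unfolding disagreements_def by (rule card_Un_le)
  finally show ?thesis by simp
qed

lemma card_le_mult_card_window_hits:
  assumes "\<And>j. j < n \<Longrightarrow> P j \<Longrightarrow> \<exists>i<L. Q (j + i)"
  shows "card {j. j < n \<and> P j} \<le> L * card {i. i < n + L \<and> Q i}"
proof -
  let ?I = "{i. i < n + L \<and> Q i}"
  have "{j. j < n \<and> P j} \<subseteq> (\<Union>i\<in>?I. {i + 1 - L..i})"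
  proof
    fix j assume "j \<in> {j. j < n \<and> P j}"
    then obtain i where "i < L" "Q (j + i)" using assms by blast
    with \<open>j \<in> _\<close> show "j \<in> (\<Union>i\<in>?I. {i + 1 - L..i})"
      by (intro UN_I[of "j + i"]) auto
  qed
  then have "card {j. j < n \<and> P j} \<le> card (\<Union>i\<in>?I. {i + 1 - L..i})"
    by (intro card_mono) auto
  also have "\<dots> \<le> (\<Sum>i\<in>?I. card {i + 1 - L..i})"
    by (rule card_UN_le) simp
  also have "\<dots> \<le> (\<Sum>i\<in>?I. L)"
    by (intro sum_mono) auto
  also have "\<dots> = L * card ?I" by simp
  finally show ?thesis .
qed

lemma visits_le_visits_add_disagreements:
  assumes "prefix_determined L C"
  shows "visits C y n \<le> visits C x n + L * disagreements x y (n + L)"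
proof -
  let ?B = "{j. j < n \<and> (shift ^^ j) y \<in> C \<and> (shift ^^ j) x \<notin> C}"
  have "visits C y n \<le> card ({j. j < n \<and> (shift ^^ j) x \<in> C} \<union> ?B)"
    unfolding visits_def by (intro card_mono) auto
  also have "\<dots> \<le> visits C x n + card ?B"
    unfolding visits_def by (rule card_Un_le)
  also have "card ?B \<le> L * disagreements x y (n + L)"
    unfolding disagreements_def
  proof (rule card_le_mult_card_window_hits)
    fix j assume "(shift ^^ j) y \<in> C \<and> (shift ^^ j) x \<notin> C"
    then have "\<not> (\<forall>i<L. (shift ^^ j) y i = (shift ^^ j) x i)"
      using assms unfolding prefix_determined_def by blast
    then show "\<exists>i<L. x (j + i) \<noteq> y (j + i)"
      unfolding funpow_shift by (auto simp: add.commute)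
  qed
  finally show ?thesis by simp
qed

lemma visits_avoid_prefix_le_disagreements:
  assumes "shift ` Y \<subseteq> Y" and "y \<in> Y"
  shows "visits (avoid_prefix Y L) z n \<le> L * disagreements z y (n + L)"
  unfolding visits_def disagreements_def
proof (rule card_le_mult_card_window_hits)
  fix j assume "(shift ^^ j) z \<in> avoid_prefix Y L"
  moreover have "(shift ^^ j) y \<in> Y" using funpow_shift_in[OF assms] .
  ultimately show "\<exists>i<L. z (j + i) \<noteq> y (j + i)"
    unfolding avoid_prefix_def funpow_shift by (auto simp: add.commute)
qed

text \<open>Discrete rising sun lemma: at a minimiser \<open>p\<close> of the partial sums of \<open>f - c\<close> every
  window starting at \<open>p\<close> has average at least \<open>c\<close>, and since the total sum is at least \<open>a n\<close>,
  the minimiser lies at distance at least \<open>(a - c) n\<close> from the end.\<close>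
lemma rising_sun:
  fixes f :: "nat \<Rightarrow> real"
  assumes f_le_1: "\<And>j. f j \<le> 1" and "0 \<le> c" and sum_ge: "a * n \<le> (\<Sum>j<n. f j)"
  shows "\<exists>p\<le>n. (a - c) * n \<le> real (n - p) \<and> (\<forall>m. p + m \<le> n \<longrightarrow> c * m \<le> (\<Sum>j<m. f (p + j)))"
proof -
  define S where "S q = (\<Sum>j<q. f j) - c * q" for q
  obtain p where "p \<le> n" and p_eq: "S p = Min (S ` {..n})"
  proof -
    have "Min (S ` {..n}) \<in> S ` {..n}" by (intro Min_in) auto
    then obtain q where "q \<le> n" "Min (S ` {..n}) = S q" by blast
    then show ?thesis using that[of q] by simp
  qed
  have p_min: "S p \<le> S q" if "q \<le> n" for q
    unfolding p_eq using that by (intro Min_le) auto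
  have split: "(\<Sum>j<p + m. f j) = (\<Sum>j<p. f j) + (\<Sum>j<m. f (p + j))" for m
    by (induction m) (simp_all add: add.assoc)
  have windows: "c * m \<le> (\<Sum>j<m. f (p + j))" if "p + m \<le> n" for m
    using p_min[OF that] unfolding S_def split by (simp add: algebra_simps)
  have "(\<Sum>j<n - p. f (p + j)) \<le> real (n - p)"
    using sum_bounded_above[of "{..<n - p}" "\<lambda>j. f (p + j)" 1] f_le_1 by simp
  then have "S n - S p \<le> real (n - p)"
    using split[of "n - p"] \<open>p \<le> n\<close> mult_left_mono[of "real p" "real n" c] \<open>0 \<le> c\<close>
    unfolding S_def by (simp add: algebra_simps of_nat_diff)
  moreover have "S p \<le> 0" using p_min[of 0] by (simp add: S_def)
  moreover have "(a - c) * n \<le> S n" using sum_ge unfolding S_def by (simp add: algebra_simps)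
  ultimately have "(a - c) * n \<le> real (n - p)" by linarith
  with \<open>p \<le> n\<close> windows show ?thesis by blast
qed

lemma rising_sun_visits:
  assumes "0 \<le> c" and "a * n \<le> real (visits C x n)"
  shows "\<exists>p\<le>n. (a - c) * n \<le> real (n - p) \<and>
    (\<forall>m. p + m \<le> n \<longrightarrow> c * m \<le> real (visits C ((shift ^^ p) x) m))"
proof -
  define f :: "nat \<Rightarrow> real" where "f j = indicator ((shift ^^ j) -` C) x" for j
  have shifted: "(\<Sum>j<m. f (p + j)) = real (visits C ((shift ^^ p) x) m)" for p m
    unfolding visits_eq_sum_indicator f_def by (simp add: funpow_add add.commute indicator_def)
  have "a * n \<le> (\<Sum>j<n. f j)"
    using assms(2) unfolding visits_eq_sum_indicator f_def .
  with rising_sun[of f c a n] \<open>0 \<le> c\<close> show ?thesis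
    unfolding shifted by (simp add: f_def indicator_def)
qed

lemma exists_uniform_visitor:
  fixes S :: "(nat \<Rightarrow> 'a::discrete_topology) set"
  assumes "compact S" and "shift ` S \<subseteq> S" and C: "prefix_determined L C"
    and "0 \<le> c" and "c < a"
    and frequent: "\<And>N. \<exists>x\<in>S. \<exists>n\<ge>N. a * n \<le> real (visits C x n)"
  shows "\<exists>z\<in>S. \<forall>m. c * m \<le> real (visits C z m)"
proof -
  define K where "K M = {z. \<forall>m\<le>M. c * m \<le> real (visits C z m)}" for M
  have "prefix_determined (M + L) (K M)" for M
    unfolding prefix_determined_def
  proof (intro allI impI)
    fix u v :: "nat \<Rightarrow> 'a" assume agree: "\<forall>i<M + L. u i = v i"
    have "visits C u m = visits C v m" if "m \<le> M" for m
      using visits_cong_prefix[OF C] agree that by (meson add_le_cancel_right less_le_trans)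
    then show "u \<in> K M \<longleftrightarrow> v \<in> K M"
      unfolding K_def by simp
  qed
  then have "closed (K M)" for M
    by (rule closed_prefix_determined)
  moreover have "decseq K"
    unfolding decseq_def K_def by auto
  moreover have "S \<inter> K M \<noteq> {}" for M
  proof -
    obtain x n where "x \<in> S" and "n \<ge> nat \<lceil>M / (a - c)\<rceil>" and "a * n \<le> real (visits C x n)"
      using frequent by blast
    then obtain p where "p \<le> n" and p_far: "(a - c) * n \<le> real (n - p)"
      and windows: "\<And>m. p + m \<le> n \<Longrightarrow> c * m \<le> real (visits C ((shift ^^ p) x) m)"
      using rising_sun_visits[OF \<open>0 \<le> c\<close>] by blast
    have "M / (a - c) \<le> n" using \<open>n \<ge> nat \<lceil>M / (a - c)\<rceil>\<close> by linarith
    then have "M \<le> (a - c) * n" using \<open>c < a\<close> by (simp add: field_simps)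
    with p_far have "M \<le> n - p" by linarith
    with \<open>p \<le> n\<close> have "(shift ^^ p) x \<in> K M"
      unfolding K_def by (auto intro!: windows)
    moreover have "(shift ^^ p) x \<in> S" using funpow_shift_in[OF assms(2) \<open>x \<in> S\<close>] .
    ultimately show ?thesis by blast
  qed
  ultimately have "S \<inter> (\<Inter>M. K M) \<noteq> {}"
    by (rule compact_Int_decseq_nonempty[OF \<open>compact S\<close>])
  then show ?thesis unfolding K_def by blast
qed

lemma liminf_disagreement_density_bounds:
  fixes x y :: "nat \<Rightarrow> 'a"
  defines "l \<equiv> liminf (\<lambda>n. ereal (real (disagreements x y n) / real n))"
  shows "0 \<le> l" and "l \<le> 1"
proof -
  show "0 \<le> l"
    unfolding l_def by (rule Liminf_bounded) simp
  have "\<forall>\<^sub>F n in sequentially. ereal (real (disagreements x y n) / real n) \<le> 1"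
    using disagreements_le[of x y] by (auto simp: divide_le_eq_1 eventually_sequentially intro!: exI[of _ 1])
  then show "l \<le> 1"
    unfolding l_def by (intro Liminf_le) auto
qed

lemma ldist_eq_real_of_ereal:
  "ldist x y = real_of_ereal (liminf (\<lambda>n. ereal (real (disagreements x y n) / real n)))"
  unfolding ldist_def disagreements_def ..

lemma ldist_bounds: "0 \<le> ldist x y" "ldist x y \<le> 1"
  using liminf_disagreement_density_bounds[of x y] unfolding ldist_eq_real_of_ereal
  by (cases "liminf (\<lambda>n. ereal (real (disagreements x y n) / real n))"; simp)+

lemma ldist_ge:
  fixes b :: real
  assumes "\<forall>\<^sub>F n in sequentially. b * n \<le> real (disagreements x y n)"
  shows "b \<le> ldist x y"
proof -
  have "\<forall>\<^sub>F n in sequentially. ereal b \<le> ereal (real (disagreements x y n) / real n)"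
    using assms eventually_gt_at_top[of 0] by eventually_elim (simp add: field_simps)
  then have "ereal b \<le> liminf (\<lambda>n. ereal (real (disagreements x y n) / real n))"
    by (rule Liminf_bounded)
  with liminf_disagreement_density_bounds[of x y] show ?thesis
    unfolding ldist_eq_real_of_ereal
    by (cases "liminf (\<lambda>n. ereal (real (disagreements x y n) / real n))") auto
qed

lemma ldist_less_imp_frequently:
  assumes "ldist x y < e"
  shows "\<exists>n\<ge>N. real (disagreements x y n) < e * n"
proof (rule ccontr)
  assume "\<not> ?thesis"
  then have "\<forall>\<^sub>F n in sequentially. e * n \<le> real (disagreements x y n)"
    unfolding eventually_sequentially by (auto simp: not_less)
  then show False using ldist_ge[of e x y] assms by linarith
qed

lemma ldist_ge_of_visits_avoid_prefix:
  assumes "shift ` Y \<subseteq> Y" and "y \<in> Y" and "0 < L" and "0 \<le> c"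
    and visits_ge: "\<And>m. c * m \<le> real (visits (avoid_prefix Y L) z m)"
  shows "c / (2 * real L) \<le> ldist z y"
proof (rule ldist_ge)
  show "\<forall>\<^sub>F n in sequentially. c / (2 * real L) * n \<le> real (disagreements z y n)"
    unfolding eventually_sequentially
  proof (intro exI[of _ "2 * L"] allI impI)
    fix n assume "2 * L \<le> n"
    then have n_minus_L: "real (n - L) = real n - L" and "n - L + L = n"
      by (simp_all add: of_nat_diff)
    have "c * (real n / 2) \<le> c * real (n - L)"
      using \<open>2 * L \<le> n\<close> \<open>0 \<le> c\<close> unfolding n_minus_L by (intro mult_left_mono) auto
    also have "\<dots> \<le> real (visits (avoid_prefix Y L) z (n - L))"
      by (rule visits_ge)
    also have "\<dots> \<le> L * real (disagreements z y n)"
      using visits_avoid_prefix_le_disagreements[OF assms(1,2), of L z "n - L"] \<open>n - L + L = n\<close>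
      by (metis of_nat_le_iff of_nat_mult)
    finally show "c / (2 * real L) * n \<le> real (disagreements z y n)"
      using \<open>0 < L\<close> by (simp add: field_simps)
  qed
qed

lemma ldistH_less_imp_ldist_less:
  assumes "A \<noteq> {}" and "ldistH A B < e" and "b \<in> B"
  shows "\<exists>a\<in>A. ldist a b < e"
proof -
  have bdd_below: "bdd_below ((\<lambda>a. ldist a b) ` A)" for b
    by (rule bdd_belowI[of _ 0]) (auto simp: ldist_bounds)
  have "(INF a\<in>A. ldist a b) \<le> 1" for b
    using \<open>A \<noteq> {}\<close> by (auto intro: cINF_lower2[OF bdd_below] ldist_bounds)
  then have "bdd_above ((\<lambda>b. INF a\<in>A. ldist a b) ` B)"
    by (intro bdd_aboveI[where M = 1]) auto
  then have "(INF a\<in>A. ldist a b) \<le> (SUP b\<in>B. INF a\<in>A. ldist a b)"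
    using \<open>b \<in> B\<close> by (rule cSUP_upper2) simp
  also have "\<dots> \<le> ldistH A B"
    unfolding ldistH_def by (rule max.cobounded2)
  finally have "(INF a\<in>A. ldist a b) < e"
    using \<open>ldistH A B < e\<close> by simp
  then show ?thesis
    using cINF_less_iff[OF \<open>A \<noteq> {}\<close> bdd_below] by auto
qed

lemma ldistH_ge:
  assumes "B \<noteq> {}" and "a \<in> A" and "\<And>b. b \<in> B \<Longrightarrow> e \<le> ldist a b"
  shows "e \<le> ldistH A B"
proof -
  have bdd_below: "bdd_below ((\<lambda>b. ldist a b) ` B)" for a
    by (rule bdd_belowI[of _ 0]) (auto simp: ldist_bounds)
  have "(INF b\<in>B. ldist a b) \<le> 1" for a
    using \<open>B \<noteq> {}\<close> by (auto intro: cINF_lower2[OF bdd_below] ldist_bounds)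
  then have "bdd_above ((\<lambda>a. INF b\<in>B. ldist a b) ` A)"
    by (intro bdd_aboveI[where M = 1]) auto
  moreover have "e \<le> (INF b\<in>B. ldist a b)"
    using assms(1,3) by (intro cINF_greatest) auto
  ultimately have "e \<le> (SUP a\<in>A. INF b\<in>B. ldist a b)"
    using \<open>a \<in> A\<close> by (meson cSUP_upper2)
  also have "\<dots> \<le> ldistH A B"
    unfolding ldistH_def by (rule max.cobounded1)
  finally show ?thesis .
qed

lemma ldistH_ge_of_visits_avoid_prefix:
  assumes "shift_space Y" and "w \<in> K" and "0 < L" and "0 \<le> c"
    and "\<And>m. c * m \<le> real (visits (avoid_prefix Y L) w m)"
  shows "c / (2 * real L) \<le> ldistH K Y"
proof (rule ldistH_ge[OF _ \<open>w \<in> K\<close>])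
  show "Y \<noteq> {}" using \<open>shift_space Y\<close> by (simp add: shift_space_def)
  fix y assume "y \<in> Y"
  show "c / (2 * real L) \<le> ldist w y"
    using \<open>shift_space Y\<close> \<open>y \<in> Y\<close> assms(3-)
    by (intro ldist_ge_of_visits_avoid_prefix) (simp_all add: shift_space_def)
qed

lemma emeasure_funpow_shift_vimage:
  assumes inv: "\<And>A. A \<in> sets borel \<Longrightarrow> emeasure M (shift -` A) = emeasure M A"
    and "C \<in> sets (borel :: (nat \<Rightarrow> 'a::topological_space) measure)"
  shows "emeasure M ((shift ^^ j) -` C) = emeasure M C"
proof (induction j)
  case (Suc j)
  have "emeasure M ((shift ^^ Suc j) -` C) = emeasure M (shift -` ((shift ^^ j) -` C))"
    by (simp only: funpow_Suc_right vimage_comp)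
  also have "\<dots> = emeasure M C"
    using inv[OF funpow_shift_vimage_borel[OF \<open>C \<in> sets borel\<close>]] Suc.IH by simp
  finally show ?case .
qed simp

lemma integral_visits:
  fixes M :: "(nat \<Rightarrow> 'a::topological_space) measure"
  assumes "prob_space M" and "sets M = sets borel"
    and "\<And>A. A \<in> sets borel \<Longrightarrow> emeasure M (shift -` A) = emeasure M A"
    and "C \<in> sets borel"
  shows "integrable M (\<lambda>x. real (visits C x n))"
    and "(\<integral>x. real (visits C x n) \<partial>M) = n * measure M C"
proof -
  interpret prob_space M by fact
  have sets: "(shift ^^ j) -` C \<in> sets M" for j
    using funpow_shift_vimage_borel[OF \<open>C \<in> sets borel\<close>] \<open>sets M = sets borel\<close> by simp
  have "measure M ((shift ^^ j) -` C) = measure M C" for j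
    using emeasure_funpow_shift_vimage[OF assms(3,4)] by (simp add: measure_def)
  then have "(\<integral>x. indicator ((shift ^^ j) -` C) x \<partial>M) = measure M C" for j
    using sets by simp
  moreover have "(\<integral>x. real (visits C x n) \<partial>M) = (\<Sum>j<n. \<integral>x. indicator ((shift ^^ j) -` C) x \<partial>M)"
    unfolding visits_eq_sum_indicator
    by (intro Bochner_Integration.integral_sum integrable_real_indicator)
      (simp_all add: sets emeasure_eq_measure)
  ultimately show "(\<integral>x. real (visits C x n) \<partial>M) = n * measure M C"
    by simp
  show "integrable M (\<lambda>x. real (visits C x n))"
    unfolding visits_eq_sum_indicator
    by (intro Bochner_Integration.integrable_sum integrable_real_indicator)
      (simp_all add: sets emeasure_eq_measure)
qed

lemma inv_measures_ex_frequent_visitor: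
  assumes "M \<in> inv_measures X" and "X \<in> sets borel" and "C \<in> sets borel"
    and "0 < measure M C" and "0 < n"
  shows "\<exists>x\<in>X. measure M C / 2 * n \<le> real (visits C x n)"
proof (rule ccontr)
  assume "\<not> ?thesis"
  then have few_visits: "\<And>x. x \<in> X \<Longrightarrow> real (visits C x n) \<le> measure M C / 2 * n" by force
  from \<open>M \<in> inv_measures X\<close> have "prob_space M" and "sets M = sets borel"
    and inv: "\<And>A. A \<in> sets borel \<Longrightarrow> emeasure M (shift -` A) = emeasure M A"
    and "emeasure M X = 1"
    unfolding inv_measures_def by auto
  interpret prob_space M by fact
  have "AE x in M. x \<in> X"
    using \<open>emeasure M X = 1\<close> \<open>X \<in> sets borel\<close> \<open>sets M = sets borel\<close>
    by (intro AE_prob_1) (simp_all add: emeasure_eq_measure)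
  then have "AE x in M. real (visits C x n) \<le> measure M C / 2 * n"
    by eventually_elim (rule few_visits)
  then have "(\<integral>x. real (visits C x n) \<partial>M) \<le> (\<integral>x. measure M C / 2 * n \<partial>M)"
    using integral_visits(1)[OF \<open>prob_space M\<close> \<open>sets M = sets borel\<close> inv \<open>C \<in> sets borel\<close>]
    by (intro integral_mono_AE) auto
  then have "n * measure M C \<le> measure M C / 2 * n"
    using integral_visits(2)[OF \<open>prob_space M\<close> \<open>sets M = sets borel\<close> inv \<open>C \<in> sets borel\<close>]
    by (simp add: prob_space)
  with \<open>0 < measure M C\<close> \<open>0 < n\<close> show False by simp
qed

lemma inv_measures_ex_avoid_prefix_positive:
  fixes Y :: "(nat \<Rightarrow> 'a::{finite,discrete_topology}) set"
  assumes "M \<in> inv_measures X" and "closed Y" and "Y \<noteq> {}" and "emeasure M Y \<noteq> 1"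
  shows "\<exists>L>0. 0 < measure M (avoid_prefix Y L)"
proof (rule ccontr)
  assume all_null: "\<not> ?thesis"
  from \<open>M \<in> inv_measures X\<close> have "prob_space M" and "sets M = sets borel"
    unfolding inv_measures_def by auto
  interpret prob_space M by fact
  have avoid_sets: "avoid_prefix Y L \<in> sets M" for L
    using borel_open[OF open_prefix_determined[OF prefix_determined_avoid_prefix]] \<open>sets M = sets borel\<close>
    by simp
  have "measure M (avoid_prefix Y L) = 0" for L
    using all_null avoid_prefix_empty[OF \<open>Y \<noteq> {}\<close>] by (cases L) (auto simp: zero_less_measure_iff)
  then have "emeasure M (\<Union>L. avoid_prefix Y L) = 0"
    using avoid_sets by (intro emeasure_UN_eq_0) (auto simp: emeasure_eq_measure)
  then have "emeasure M (- Y) = 0"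
    unfolding Union_avoid_prefix[OF \<open>closed Y\<close>] .
  moreover have "Y \<in> sets M" using \<open>closed Y\<close> \<open>sets M = sets borel\<close> by simp
  ultimately have "emeasure M Y = 1"
    using prob_compl[of Y] sets_eq_imp_space_eq[OF \<open>sets M = sets borel\<close>]
    by (simp add: emeasure_eq_measure Compl_eq_Diff_UNIV)
  with \<open>emeasure M Y \<noteq> 1\<close> show False ..
qed

lemma inv_measures_ex_uniform_visitor:
  fixes X :: "(nat \<Rightarrow> 'a::{finite,discrete_topology}) set"
  assumes M: "M \<in> inv_measures X" and "shift_space X" and C: "prefix_determined L C"
    and "0 < measure M C"
  shows "\<exists>z\<in>X. \<forall>m. measure M C / 4 * m \<le> real (visits C z m)"
proof -
  have "X \<in> sets borel" and "shift ` X \<subseteq> X" and "C \<in> sets borel"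
    using \<open>shift_space X\<close> borel_open[OF open_prefix_determined[OF C]]
    by (simp_all add: shift_space_def)
  have "\<exists>x\<in>X. \<exists>n\<ge>N. measure M C / 2 * n \<le> real (visits C x n)" for N
  proof -
    have "\<exists>x\<in>X. measure M C / 2 * max N 1 \<le> real (visits C x (max N 1))"
      using inv_measures_ex_frequent_visitor[OF M \<open>X \<in> sets borel\<close> \<open>C \<in> sets borel\<close>] \<open>0 < measure M C\<close>
      by simp
    then show ?thesis by (meson max.cobounded1)
  qed
  then show ?thesis
    using exists_uniform_visitor[OF compact_shift_space[OF \<open>shift_space X\<close>] \<open>shift ` X \<subseteq> X\<close> C,
        of "measure M C / 4" "measure M C / 2"] \<open>0 < measure M C\<close>
    by simp
qed

text \<open>A point of \<open>K\<close> that is \<open>ldist\<close>-close to \<open>z\<close> agrees with \<open>z\<close> on a set of density close to 1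
  along a subsequence, so it inherits most of the visits of \<open>z\<close> to \<open>C\<close> there; compactness
  then upgrades these frequent visits to visits at every time scale.\<close>
lemma exists_uniform_visitor_near:
  fixes K X :: "(nat \<Rightarrow> 'a::{finite,discrete_topology}) set"
  assumes "shift_space K" and C: "prefix_determined L C" and "0 < L" and "0 < c"
    and "z \<in> X" and visits_z: "\<And>m. c * m \<le> real (visits C z m)"
    and "ldistH K X < c / (4 * real L)"
  shows "\<exists>w\<in>K. \<forall>m. c / 4 * m \<le> real (visits C w m)"
proof -
  have "K \<noteq> {}" and "shift ` K \<subseteq> K"
    using \<open>shift_space K\<close> by (simp_all add: shift_space_def)
  then obtain x where "x \<in> K" and close: "ldist x z < c / (4 * real L)"
    using ldistH_less_imp_ldist_less[OF \<open>K \<noteq> {}\<close> \<open>ldistH K X < _\<close> \<open>z \<in> X\<close>] by blast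
  have frequent: "\<exists>x\<in>K. \<exists>n\<ge>N. c / 2 * n \<le> real (visits C x n)" for N
  proof -
    obtain n where n_ge: "n \<ge> max N (nat \<lceil>4 * L * L / c\<rceil>)"
      and few_disagreements: "real (disagreements x z n) < c / (4 * real L) * n"
      using ldist_less_imp_frequently[OF close] by blast
    have "4 * L * L / c \<le> n" using n_ge by linarith
    then have "L * L \<le> c / 4 * n" using \<open>0 < c\<close> by (simp add: field_simps)
    have "L * real (disagreements x z n) \<le> L * (c / (4 * real L) * n)"
      using few_disagreements by (intro mult_left_mono) auto
    also have "\<dots> = c / 4 * n" using \<open>0 < L\<close> by simp
    finally have "L * real (disagreements x z n) \<le> c / 4 * n" .
    have "real (visits C z n) \<le> visits C x n + L * real (disagreements x z (n + L))"
      using visits_le_visits_add_disagreements[OF C, of z n x] by (metis of_nat_add of_nat_le_iff of_nat_mult)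
    also have "\<dots> \<le> visits C x n + L * (real (disagreements x z n) + L)"
      using disagreements_add_le[of x z n L] by (intro add_left_mono mult_left_mono) auto
    finally have "c / 2 * n \<le> real (visits C x n)"
      using visits_z[of n] \<open>L * L \<le> c / 4 * n\<close> \<open>L * real (disagreements x z n) \<le> c / 4 * n\<close>
      by (simp add: algebra_simps)
    moreover have "n \<ge> N" using n_ge by simp
    ultimately show ?thesis using \<open>x \<in> K\<close> by blast
  qed
  show ?thesis
    by (rule exists_uniform_visitor[OF compact_shift_space[OF \<open>shift_space K\<close>] \<open>shift ` K \<subseteq> K\<close> C, of "c / 4" "c / 2"])
      (use \<open>0 < c\<close> frequent in auto)
qed

lemma inv_measures_subset:
  fixes Xs :: "nat \<Rightarrow> (nat \<Rightarrow> 'a::{finite,discrete_topology}) set"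
    and X Y :: "(nat \<Rightarrow> 'a) set"
  assumes Xs: "\<And>k. shift_space (Xs k)" and "shift_space X" and "shift_space Y"
    and lim_X: "(\<lambda>k. ldistH (Xs k) X) \<longlonglongrightarrow> 0"
    and lim_Y: "(\<lambda>k. ldistH (Xs k) Y) \<longlonglongrightarrow> 0"
  shows "inv_measures X \<subseteq> inv_measures Y"
proof
  fix M assume M: "M \<in> inv_measures X"
  have "emeasure M Y = 1"
  proof (rule ccontr)
    assume "emeasure M Y \<noteq> 1"
    then obtain L where "0 < L" and pos: "0 < measure M (avoid_prefix Y L)"
      using inv_measures_ex_avoid_prefix_positive[OF M] \<open>shift_space Y\<close>
      by (auto simp: shift_space_def)
    define C where "C = avoid_prefix Y L"
    define a where "a = measure M C"
    have "0 < a" and C: "prefix_determined L C"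
      using pos prefix_determined_avoid_prefix by (auto simp: a_def C_def)
    obtain z where "z \<in> X" and visits_z: "\<And>m. a / 4 * m \<le> real (visits C z m)"
      using inv_measures_ex_uniform_visitor[OF M \<open>shift_space X\<close> C] \<open>0 < a\<close>
      unfolding a_def by blast
    have "\<forall>\<^sub>F k in sequentially. ldistH (Xs k) X < a / 4 / (4 * real L)
        \<and> ldistH (Xs k) Y < a / 4 / 4 / (2 * real L)"
      using \<open>0 < a\<close> \<open>0 < L\<close>
      by (intro eventually_conj order_tendstoD(2)[OF lim_X] order_tendstoD(2)[OF lim_Y]) simp_all
    then obtain k where close_X: "ldistH (Xs k) X < a / 4 / (4 * real L)"
      and close_Y: "ldistH (Xs k) Y < a / 4 / 4 / (2 * real L)"
      unfolding eventually_sequentially by blast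
    obtain w where "w \<in> Xs k" and visits_w: "\<And>m. a / 4 / 4 * m \<le> real (visits C w m)"
      using exists_uniform_visitor_near[OF Xs C \<open>0 < L\<close> _ \<open>z \<in> X\<close> visits_z close_X] \<open>0 < a\<close>
      by auto
    have "a / 4 / 4 / (2 * real L) \<le> ldistH (Xs k) Y"
      using \<open>0 < a\<close> visits_w unfolding C_def
      by (intro ldistH_ge_of_visits_avoid_prefix[OF \<open>shift_space Y\<close> \<open>w \<in> Xs k\<close> \<open>0 < L\<close>]) simp_all
    with close_Y show False by simp
  qed
  with M show "M \<in> inv_measures Y"
    unfolding inv_measures_def by simp
qed

theorem mainTheorem12:
  fixes Xs :: "nat \<Rightarrow> (nat \<Rightarrow> 'a::{finite,discrete_topology}) set"
    and X Y :: "(nat \<Rightarrow> 'a) set"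
  assumes "\<And>k. shift_space (Xs k)" and "shift_space X" and "shift_space Y"
    and "(\<lambda>k. ldistH (Xs k) X) \<longlonglongrightarrow> 0"
    and "(\<lambda>k. ldistH (Xs k) Y) \<longlonglongrightarrow> 0"
  shows "inv_measures X = inv_measures Y"
  using inv_measures_subset[OF assms] inv_measures_subset[OF assms(1,3,2,5,4)] by blast

end
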